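(* Let $\Omega$ be a domain in $\mathbb C^n$. Suppose $f=u+iv$ is holomorphic on $\Omega$ (with $u,v$ real-valued), $|u|\le 1$ on $\Omega$, and $v(z_0)=0$ for some $z_0\in\Omega$. Then for any $\alpha>1$ there exists a constant $C_\alpha>0$ such that $$\int_{\partial\Omega_t}\frac{\exp\left(\frac{\pi}{2}|f|\right)}{(1+|f|)^\alpha}\,d\omega_{z_0,t}\le C_\alpha$$ holds for every $t$ and for any exhaustion $\{\Omega_t\}$ of $\Omega$ with $z_0\in\Omega_t$.
   Context: An exhaustion $\{\Omega_t\}$ of $\Omega$ is an increasing family of relatively compact subdomains of $\Omega$ whose union is $\Omega$. For such $\Omega_t\ni z_0$, $d\omega_{z_0,t}$ denotes the harmonic measure of $\Omega_t$ relative to $z_0$ (harmonicity with respect to the Euclidean Laplacian on $\mathbb C^n\cong\mathbb R^{2n}$). *)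

theory Defs
  imports "HOL-Analysis.Analysis"
begin

text \<open>C^n is modelled as complex^'n (a Euclidean space of real dimension 2n);
  Lebesgue measure lborel on it is Lebesgue measure on R^(2n).\<close>

definition holomorphic_several :: "(complex^'n \<Rightarrow> complex) \<Rightarrow> (complex^'n) set \<Rightarrow> bool" where
  "holomorphic_several f S \<longleftrightarrow>
     (\<forall>z\<in>S. \<exists>L. (f has_derivative L) (at z) \<and> (\<forall>c w. L (c *s w) = c * L w))"

definition domain :: "'a::topological_space set \<Rightarrow> bool" where
  "domain D \<longleftrightarrow> open D \<and> connected D \<and> D \<noteq> {}"

definition rel_compact_subdomain :: "'a::metric_space set \<Rightarrow> 'a set \<Rightarrow> bool" where
  "rel_compact_subdomain D \<Omega> \<longleftrightarrow> domain D \<and> compact (closure D) \<and> closure D \<subseteq> \<Omega>"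

definition exhaustion :: "(real \<Rightarrow> 'a::metric_space set) \<Rightarrow> 'a set \<Rightarrow> bool" where
  "exhaustion \<Omega>t \<Omega> \<longleftrightarrow>
     (\<forall>t. rel_compact_subdomain (\<Omega>t t) \<Omega>) \<and> (\<forall>s t. s \<le> t \<longrightarrow> \<Omega>t s \<subseteq> \<Omega>t t) \<and>
     (\<Union>t. \<Omega>t t) = \<Omega>"

definition cont_superharmonic_on :: "'a::euclidean_space set \<Rightarrow> ('a \<Rightarrow> real) \<Rightarrow> bool" where
  "cont_superharmonic_on D s \<longleftrightarrow> continuous_on D s \<and>
     (\<forall>x r. r > 0 \<longrightarrow> cball x r \<subseteq> D \<longrightarrow>
        s x \<ge> (LINT y:cball x r|lborel. s y) / measure lborel (cball x r))"

definition perron_upper_class :: "'a::euclidean_space set \<Rightarrow> ('a \<Rightarrow> real) \<Rightarrow> ('a \<Rightarrow> real) set" where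
  "perron_upper_class D \<phi> = {s. cont_superharmonic_on D s \<and> bdd_below (s ` D) \<and>
     (\<forall>\<zeta>\<in>frontier D. \<forall>e>0. \<exists>d>0. \<forall>z\<in>D. dist z \<zeta> < d \<longrightarrow> s z > \<phi> \<zeta> - e)}"

definition perron_solution :: "'a::euclidean_space set \<Rightarrow> ('a \<Rightarrow> real) \<Rightarrow> 'a \<Rightarrow> real" where
  "perron_solution D \<phi> x = (INF s\<in>perron_upper_class D \<phi>. s x)"

definition harmonic_measure :: "'a::euclidean_space set \<Rightarrow> 'a \<Rightarrow> 'a measure \<Rightarrow> bool" where
  "harmonic_measure D x0 \<omega> \<longleftrightarrow>
     sets \<omega> = sets (restrict_space borel (frontier D)) \<and> finite_measure \<omega> \<and>
     (\<forall>\<phi>. continuous_on (frontier D) \<phi> \<longrightarrow> (\<integral>y. \<phi> y \<partial>\<omega>) = perron_solution D \<phi> x0)"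

end

theory Submission
  imports Defs "HOL-Complex_Analysis.Cauchy_Integral_Formula" "HOL-Library.Numeral_Type"
begin

text \<open>For \<open>0 \<le> c \<le> \<pi>/2\<close> the function \<open>Re (cos (c f))\<close> is pluriharmonic and, since
  \<open>|Re f| \<le> 1\<close>, nonnegative. Averaging the one-variable mean value property over the complex
  lines through a point gives the mean value property on balls, so the function belongs to its own
  Perron upper class on each \<open>\<Omega>t t\<close>, and its integral against harmonic measure is at most its
  value \<open>cos (c Re f(z0)) \<le> 1\<close> at \<open>z0\<close>. For \<open>c = \<pi>/2 - 2^(-k-1)\<close>, where
  \<open>2^k \<le> 1 + |Im w| < 2^(k+1)\<close>, an elementary estimate gives
  \<open>exp (\<pi>/2 |w|) / (1 + |w|)^\<alpha> \<le> A 2^((1-\<alpha>)(k+1)) Re (cos (c w))\<close> with \<open>A\<close> independent of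
  \<open>w\<close>. Summing over \<open>k\<close> yields a geometric series, which converges because \<open>\<alpha> > 1\<close>.\<close>

section \<open>Orthogonal maps preserve Lebesgue measure\<close>

lemma borel_measurable_linear:
  fixes f :: "'a::euclidean_space \<Rightarrow> 'b::euclidean_space"
  shows "linear f \<Longrightarrow> f \<in> borel_measurable borel"
  by (intro borel_measurable_continuous_onI linear_continuous_on) (simp add: linear_conv_bounded_linear)

definition basis_coords :: "('m::finite \<Rightarrow> 'a::real_inner) \<Rightarrow> 'a \<Rightarrow> real^'m" where
  "basis_coords \<beta> x = (\<chi> k. x \<bullet> \<beta> k)"

lemma
  fixes \<beta> :: "'m::finite \<Rightarrow> 'a::euclidean_space"
  assumes \<beta>: "bij_betw \<beta> UNIV Basis"
  shows orthogonal_transformation_basis_coords: "orthogonal_transformation (basis_coords \<beta>)"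
    and surj_basis_coords: "surj (basis_coords \<beta>)"
proof -
  have "linear (basis_coords \<beta>)"
    by (rule linearI) (simp_all add: basis_coords_def vec_eq_iff inner_add_left)
  moreover have "basis_coords \<beta> x \<bullet> basis_coords \<beta> y = x \<bullet> y" for x y
    using sum.reindex_bij_betw[OF \<beta>, of "\<lambda>b. x \<bullet> b * (y \<bullet> b)"]
    by (simp add: basis_coords_def inner_vec_def euclidean_inner[of x y])
  ultimately show "orthogonal_transformation (basis_coords \<beta>)"
    by (simp add: orthogonal_transformation_def)
  have orth: "\<beta> j \<bullet> \<beta> k = of_bool (j = k)" for j k
    using bij_betw_apply[OF \<beta>] bij_betw_imp_inj_on[OF \<beta>] by (auto simp: inner_Basis inj_on_def)
  have "basis_coords \<beta> (\<Sum>j\<in>UNIV. v $ j *\<^sub>R \<beta> j) = v" for v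
    by (simp add: basis_coords_def vec_eq_iff inner_sum_left orth)
  then show "surj (basis_coords \<beta>)"
    by (rule surjI)
qed

lemma distr_lborel_basis_coords:
  fixes \<beta> :: "'m::finite \<Rightarrow> 'a::euclidean_space"
  assumes \<beta>: "bij_betw \<beta> UNIV Basis"
  shows "distr lborel borel (basis_coords \<beta>) = lborel"
proof (rule lborel_eqI[symmetric])
  define \<Psi> where "\<Psi> = inv (basis_coords \<beta>)"
  have \<Psi>_inner: "\<Psi> v \<bullet> \<beta> k = v $ k" for v k
    using surj_f_inv_f[OF surj_basis_coords[OF \<beta>], of v] by (simp add: \<Psi>_def basis_coords_def vec_eq_iff)
  have forall_Basis: "(\<forall>b\<in>Basis. P b) \<longleftrightarrow> (\<forall>k. P (\<beta> k))" for P
  proof -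
    have Basis_eq: "Basis = range \<beta>" using \<beta> by (simp add: bij_betw_def)
    show ?thesis unfolding Basis_eq by simp
  qed
  fix l u :: "real^'m" assume lu: "\<And>b. b \<in> Basis \<Longrightarrow> l \<bullet> b \<le> u \<bullet> b"
  have le: "l $ k \<le> u $ k" for k
    using lu[of "axis k 1"] by (auto simp: Basis_vec_def inner_axis)
  have "basis_coords \<beta> -` box l u = box (\<Psi> l) (\<Psi> u)"
    by (auto simp: mem_box forall_Basis \<Psi>_inner Basis_vec_def inner_axis basis_coords_def)
  then have "emeasure (distr lborel borel (basis_coords \<beta>)) (box l u) = emeasure lborel (box (\<Psi> l) (\<Psi> u))"
    using orthogonal_transformation_basis_coords[OF \<beta>]
    by (simp add: emeasure_distr borel_measurable_linear orthogonal_transformation_linear)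
  also have "\<dots> = (\<Prod>b\<in>Basis. (\<Psi> u - \<Psi> l) \<bullet> b)"
    using le by (simp add: emeasure_lborel_box_eq forall_Basis \<Psi>_inner)
  also have "\<dots> = (\<Prod>k\<in>UNIV. (u - l) $ k)"
    using prod.reindex_bij_betw[OF \<beta>, of "\<lambda>b. (\<Psi> u - \<Psi> l) \<bullet> b"] by (simp add: inner_diff_left \<Psi>_inner)
  also have "\<dots> = (\<Prod>b\<in>Basis. (u - l) \<bullet> b)"
  proof -
    have Basis_eq: "(Basis :: (real^'m) set) = range (\<lambda>k. axis k 1)"
      by (auto simp: Basis_vec_def)
    have "inj (\<lambda>k::'m. axis k (1::real))"
      by (auto simp: inj_on_def axis_eq_axis)
    then show ?thesis
      unfolding Basis_eq by (simp add: prod.reindex inner_axis)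
  qed
  finally show "emeasure (distr lborel borel (basis_coords \<beta>)) (box l u) = (\<Prod>b\<in>Basis. (u - l) \<bullet> b)" .
qed simp

lemma distr_lborel_orthogonal_cart:
  fixes Q :: "real^'m::{finite,wellorder} \<Rightarrow> real^'m::_"
  assumes Q: "orthogonal_transformation Q"
  shows "distr lborel borel Q = lborel"
proof (rule lborel_eqI[symmetric])
  fix l u :: "(real, 'm) vec" assume "\<And>b. b \<in> Basis \<Longrightarrow> l \<bullet> b \<le> u \<bullet> b"
  then have box: "emeasure lborel (box l u) = (\<Prod>b\<in>Basis. (u - l) \<bullet> b)"
    by (simp add: emeasure_lborel_box_eq)
  have meas: "Q \<in> borel_measurable borel"
    using Q by (simp add: borel_measurable_linear orthogonal_transformation_linear)
  have "Q -` box l u \<in> sets borel"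
    using measurable_sets_borel[OF meas, of "box l u"] by simp
  then have "emeasure (distr lborel borel Q) (box l u) = emeasure lebesgue (Q -` box l u)"
    using meas by (simp add: emeasure_distr emeasure_completion)
  also have "Q -` box l u = inv Q ` box l u"
    using orthogonal_transformation_bij[OF Q] by (rule bij_vimage_eq_inv_image)
  also have "emeasure lebesgue (inv Q ` box l u) = emeasure lebesgue (box l u)"
    using orthogonal_transformation_inv[OF Q]
    by (simp add: measure_orthogonal_image measurable_orthogonal_image emeasure_eq_measure2)
  finally show "emeasure (distr lborel borel Q) (box l u) = (\<Prod>b\<in>Basis. (u - l) \<bullet> b)"
    using box by (simp add: emeasure_completion)
qed simp

lemma orthogonal_transformation_inv_surj:
  fixes f :: "'a::real_inner \<Rightarrow> 'b::real_inner"
  assumes f: "orthogonal_transformation f" and "surj f"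
  shows "orthogonal_transformation (inv f)"
proof -
  have inj: "inj f" and lin: "linear f"
    using f by (simp_all add: orthogonal_transformation_inj orthogonal_transformation_linear)
  have f_inv: "f (inv f v) = v" for v
    using \<open>surj f\<close> by (rule surj_f_inv_f)
  have "linear (inv f)"
  proof (rule linearI)
    show "inv f (v + w) = inv f v + inv f w" for v w
      by (rule injD[OF inj]) (simp add: f_inv linear_add[OF lin])
    show "inv f (c *\<^sub>R v) = c *\<^sub>R inv f v" for c v
      by (rule injD[OF inj]) (simp add: f_inv linear_scale[OF lin])
  qed
  moreover have "inv f v \<bullet> inv f w = v \<bullet> w" for v w
    using f f_inv unfolding orthogonal_transformation_def by metis
  ultimately show ?thesis
    by (simp add: orthogonal_transformation_def)
qed

lemma distr_lborel_orthogonal_transformation: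
  fixes Q :: "'a::euclidean_space \<Rightarrow> 'a"
  assumes Q: "orthogonal_transformation Q" and dim: "CARD('m::{finite,wellorder}) = DIM('a)"
  shows "distr lborel borel Q = lborel"
proof -
  obtain \<beta> :: "'m \<Rightarrow> 'a" where \<beta>: "bij_betw \<beta> UNIV Basis"
    using finite_same_card_bij[of "UNIV :: 'm set" Basis] dim by auto
  define \<Phi> where "\<Phi> = basis_coords \<beta>"
  define \<Psi> where "\<Psi> = inv \<Phi>"
  have \<Phi>: "orthogonal_transformation \<Phi>" and "surj \<Phi>"
    using \<beta> by (simp_all add: \<Phi>_def orthogonal_transformation_basis_coords surj_basis_coords)
  then have \<Psi>: "orthogonal_transformation \<Psi>" and \<Psi>\<Phi>: "\<Psi> (\<Phi> x) = x" for x
    by (simp_all add: \<Psi>_def orthogonal_transformation_inv_surj orthogonal_transformation_inj)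
  have distr_\<Phi>: "distr lborel borel \<Phi> = lborel"
    using \<beta> by (simp add: \<Phi>_def distr_lborel_basis_coords)
  have meas: "f \<in> borel_measurable borel" if "orthogonal_transformation f"
    for f :: "'x::euclidean_space \<Rightarrow> 'y::euclidean_space"
    using that by (simp add: borel_measurable_linear orthogonal_transformation_linear)
  have "distr lborel borel \<Psi> = distr (distr lborel borel \<Phi>) borel \<Psi>"
    by (simp add: distr_\<Phi>)
  also have "\<dots> = distr lborel borel (\<Psi> \<circ> \<Phi>)"
    by (simp add: distr_distr meas \<Phi> \<Psi>)
  finally have distr_\<Psi>: "distr lborel borel \<Psi> = lborel"
    by (simp add: \<Psi>\<Phi> o_def distr_id2)
  \<comment> \<open>In coordinates \<open>Q\<close> is an orthogonal map of \<open>real^'m\<close>, the only setting in which the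
    library (\<open>measure_orthogonal_image\<close>) states invariance; \<open>'m\<close> serves no other purpose.\<close>
  have Q': "orthogonal_transformation (\<Phi> \<circ> Q \<circ> \<Psi>)"
    by (intro orthogonal_transformation_compose \<Phi> \<Psi> Q)
  have "lborel = distr (distr (distr lborel borel \<Phi>) borel (\<Phi> \<circ> Q \<circ> \<Psi>)) borel \<Psi>"
    by (simp only: distr_\<Phi> distr_\<Psi> distr_lborel_orthogonal_cart[OF Q'])
  also have "\<dots> = distr lborel borel (\<Psi> \<circ> ((\<Phi> \<circ> Q \<circ> \<Psi>) \<circ> \<Phi>))"
    using \<Phi> \<Psi> Q' by (simp add: distr_distr meas orthogonal_transformation_compose)
  also have "\<Psi> \<circ> ((\<Phi> \<circ> Q \<circ> \<Psi>) \<circ> \<Phi>) = Q"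
    by (simp add: fun_eq_iff \<Psi>\<Phi>)
  finally show ?thesis ..
qed

lemma norm_vector_scalar_mult_complex: "norm (c *s z) = cmod c * norm (z :: complex^'n)"
proof -
  have "norm (c *s z) = L2_set (\<lambda>i. cmod c * norm (z $ i)) UNIV"
    by (simp add: norm_vec_def norm_mult)
  also have "\<dots> = cmod c * norm z"
    by (simp add: L2_set_right_distrib norm_vec_def)
  finally show ?thesis .
qed

lemma linear_vector_scalar_mult_complex: "linear (\<lambda>z::complex^'n. c *s z)"
  by (rule linearI) (auto simp: vec_eq_iff scaleR_conv_of_real algebra_simps)

lemma continuous_on_vector_scalar_mult_complex[continuous_intros]:
  fixes g :: "'a::topological_space \<Rightarrow> complex" and h :: "'a \<Rightarrow> complex^'n"
  assumes "continuous_on S g" "continuous_on S h"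
  shows "continuous_on S (\<lambda>t. g t *s h t)"
proof -
  have "(\<lambda>t. g t *s h t) = (\<lambda>t. \<chi> i. g t * h t $ i)"
    by (auto simp: vec_eq_iff)
  then show ?thesis
    using assms by (simp only:) (intro continuous_on_vec_lambda continuous_intros)
qed

lemma distr_lborel_complex_rotation:
  fixes x :: "complex^'n"
  assumes "cmod \<zeta> = 1"
  shows "distr lborel borel (\<lambda>y. x + \<zeta> *s (y - x)) = lborel"
proof -
  have rot: "orthogonal_transformation (\<lambda>z::complex^'n. \<zeta> *s z)"
    using assms by (simp add: orthogonal_transformation linear_vector_scalar_mult_complex
        norm_vector_scalar_mult_complex)
  have dim: "CARD('n bit0) = DIM(complex^'n)"
    by simp
  have meas_rot: "(\<lambda>z. \<zeta> *s z) \<in> borel_measurable borel"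
    by (rule borel_measurable_linear[OF linear_vector_scalar_mult_complex])
  have meas_plus: "(+) a \<in> borel_measurable borel" for a :: "complex^'n"
    by (intro borel_measurable_continuous_onI continuous_intros)
  have "(\<lambda>y. x + \<zeta> *s (y - x)) = (+) x \<circ> ((\<lambda>z. \<zeta> *s z) \<circ> (+) (- x))"
    by (simp add: fun_eq_iff vector_ssub_ldistrib)
  then have "distr lborel borel (\<lambda>y. x + \<zeta> *s (y - x))
      = distr (distr (distr lborel borel ((+) (- x))) borel (\<lambda>z. \<zeta> *s z)) borel ((+) x)"
    using measurable_comp[OF meas_plus meas_rot] by (simp add: distr_distr meas_rot meas_plus)
  also have "\<dots> = lborel"
    by (simp add: lborel_distr_plus distr_lborel_orthogonal_transformation[OF rot dim])
  finally show ?thesis .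
qed

lemma holomorphic_severalE:
  assumes "holomorphic_several f S" "z \<in> S"
  obtains L where "(f has_derivative L) (at z)" "\<And>c w. L (c *s w) = c * L w"
  using assms unfolding holomorphic_several_def by metis

lemma holomorphic_several_subset:
  "holomorphic_several f S \<Longrightarrow> T \<subseteq> S \<Longrightarrow> holomorphic_several f T"
  unfolding holomorphic_several_def by (simp add: subset_iff)

lemma holomorphic_several_imp_continuous_on:
  "holomorphic_several f S \<Longrightarrow> continuous_on S f"
  by (metis holomorphic_severalE continuous_at_imp_continuous_on has_derivative_continuous)

lemma holomorphic_several_compose:
  assumes f: "holomorphic_several f S" and g: "g holomorphic_on T" "open T" and fST: "f ` S \<subseteq> T"
  shows "holomorphic_several (\<lambda>z. g (f z)) S"
  unfolding holomorphic_several_def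
proof
  fix z assume z: "z \<in> S"
  obtain L where L: "(f has_derivative L) (at z)" and lin: "\<And>c w. L (c *s w) = c * L w"
    using holomorphic_severalE[OF f z] by blast
  have "g field_differentiable at (f z)"
    using g z fST holomorphic_on_imp_differentiable_at by blast
  then obtain D where "(g has_derivative (*) D) (at (f z))"
    by (auto simp: field_differentiable_def has_field_derivative_def)
  from diff_chain_at[OF L this] have "((\<lambda>z. g (f z)) has_derivative (\<lambda>w. D * L w)) (at z)"
    by (simp add: o_def)
  then show "\<exists>L. ((\<lambda>z. g (f z)) has_derivative L) (at z) \<and> (\<forall>c w. L (c *s w) = c * L w)"
    by (intro exI[of _ "\<lambda>w. D * L w"]) (simp add: lin)
qed

lemma holomorphic_several_imp_holomorphic_on_line:
  fixes f :: "complex^'n \<Rightarrow> complex"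
  assumes f: "holomorphic_several f S"
  shows "(\<lambda>l. f (x + l *s v)) holomorphic_on {l. x + l *s v \<in> S}"
proof -
  have "(\<lambda>l. f (x + l *s v)) field_differentiable at l" if l: "x + l *s v \<in> S" for l
  proof -
    obtain L where L: "(f has_derivative L) (at (x + l *s v))" and lin: "\<And>c w. L (c *s w) = c * L w"
      using holomorphic_severalE[OF f l] by blast
    have "linear (\<lambda>h::complex. h *s v)"
      by (rule linearI; rule vec_eq_iff[THEN iffD2]; simp add: algebra_simps mult_scaleR_left)
    then have "((\<lambda>h. h *s v) has_derivative (\<lambda>h. h *s v)) (at l)"
      by (simp add: bounded_linear_imp_has_derivative linear_conv_bounded_linear)
    then have "((\<lambda>h. x + h *s v) has_derivative (\<lambda>h. h *s v)) (at l)"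
      by (intro derivative_eq_intros) auto
    from diff_chain_at[OF this L] have "((\<lambda>l. f (x + l *s v)) has_derivative (\<lambda>h. L v * h)) (at l)"
      by (simp add: o_def lin mult.commute)
    then have "((\<lambda>l. f (x + l *s v)) has_field_derivative L v) (at l)"
      by (simp add: has_field_derivative_def)
    then show ?thesis
      unfolding field_differentiable_def ..
  qed
  then show ?thesis
    unfolding holomorphic_on_def by (blast intro: field_differentiable_at_within)
qed

section \<open>Mean value property of pluriharmonic functions\<close>

lemma circle_mean_Re_holomorphic:
  fixes g :: "complex \<Rightarrow> complex"
  assumes "open W" "cball 0 1 \<subseteq> W" and g: "g holomorphic_on W"
  shows "(LINT t:{0..1}|lborel. Re (g (exp (2 * of_real pi * \<i> * of_real t)))) = Re (g 0)"
proof -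
  have cont: "continuous_on W g"
    using g holomorphic_on_imp_continuous_on by blast
  have "((\<lambda>w. g w / (w - 0)) has_contour_integral (2 * of_real pi * \<i> * g 0)) (circlepath 0 1)"
  proof (rule Cauchy_integral_circlepath)
    show "continuous_on (cball 0 1) g"
      using assms(2) cont by (rule continuous_on_subset[rotated])
    show "g holomorphic_on ball 0 1"
      using assms(2) g ball_subset_cball by (blast intro: holomorphic_on_subset)
  qed simp
  then have "((\<lambda>t. 2 * of_real pi * \<i> * g (exp (2 * of_real pi * \<i> * of_real t))) has_integral 2 * of_real pi * \<i> * g 0) {0..1}"
    unfolding has_contour_integral vector_derivative_circlepath by (simp add: circlepath mult_ac)
  then have "((\<lambda>t. g (exp (2 * of_real pi * \<i> * of_real t))) has_integral g 0) {0..1}"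
    by (subst (asm) has_integral_mult_right_iff) simp_all
  from has_integral_linear[OF this bounded_linear_Re]
  have "((\<lambda>t. Re (g (exp (2 * of_real pi * \<i> * of_real t)))) has_integral Re (g 0)) {0..1}"
    by (simp add: o_def)
  moreover have "continuous_on {0..1} (\<lambda>t::real. Re (g (exp (2 * of_real pi * \<i> * of_real t))))"
    using assms(2) by (intro continuous_intros continuous_on_compose2[OF cont])
      (auto simp: norm_exp_eq_Re)
  ultimately show ?thesis
    by (metis borel_integrable_compact compact_Icc integral_unique set_borel_integral_eq_integral(2)
        set_integrable_def)
qed

lemma set_integral_cball_complex_rotation:
  fixes u :: "complex^'n \<Rightarrow> real"
  assumes \<zeta>: "cmod \<zeta> = 1" and u: "continuous_on (cball x r) u"
  shows "(LINT y:cball x r|lborel. u (x + \<zeta> *s (y - x))) = (LINT y:cball x r|lborel. u y)"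
proof -
  have "dist x (x + \<zeta> *s (y - x)) = dist x y" for y
    using \<zeta> norm_vector_scalar_mult_complex[of \<zeta> "x - y"] by (simp add: dist_norm vector_ssub_ldistrib)
  then have "(LINT y:cball x r|lborel. u (x + \<zeta> *s (y - x)))
      = (\<integral>y. indicator (cball x r) (x + \<zeta> *s (y - x)) *\<^sub>R u (x + \<zeta> *s (y - x)) \<partial>lborel)"
    unfolding set_lebesgue_integral_def by (intro Bochner_Integration.integral_cong) (simp_all add: indicator_def)
  also have "\<dots> = (\<integral>y. indicator (cball x r) y *\<^sub>R u y \<partial>distr lborel borel (\<lambda>y. x + \<zeta> *s (y - x)))"
    using u by (intro integral_distr[symmetric] borel_measurable_continuous_on_indicator)
      (auto intro!: borel_measurable_continuous_onI continuous_intros)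
  also have "\<dots> = (LINT y:cball x r|lborel. u y)"
    unfolding distr_lborel_complex_rotation[OF \<zeta>] set_lebesgue_integral_def ..
  finally show ?thesis .
qed

lemma circle_mean_Re_holomorphic_several:
  fixes F :: "complex^'n \<Rightarrow> complex"
  assumes U: "open U" "cball x r \<subseteq> U" and F: "holomorphic_several F U" and y: "y \<in> cball x r"
  shows "(LINT t:{0..1}|lborel. Re (F (x + exp (2 * of_real pi * \<i> * of_real t) *s (y - x)))) = Re (F x)"
proof -
  define W where "W = {l. x + l *s (y - x) \<in> U}"
  have "W = (\<lambda>l. x + l *s (y - x)) -` U"
    by (auto simp: W_def)
  then have "open W"
    using U(1) by (auto intro!: open_vimage continuous_intros)
  moreover have "cball 0 1 \<subseteq> W"
  proof
    fix l :: complex assume "l \<in> cball 0 1"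
    then have "norm (l *s (y - x)) \<le> norm (y - x)"
      by (simp add: norm_vector_scalar_mult_complex mult_left_le_one_le del: vector_ssub_ldistrib)
    then show "l \<in> W"
      using y U(2) by (auto simp: W_def dist_norm norm_minus_commute)
  qed
  moreover have "(\<lambda>l. F (x + l *s (y - x))) holomorphic_on W"
    unfolding W_def by (rule holomorphic_several_imp_holomorphic_on_line[OF F])
  ultimately show ?thesis
    by (auto dest: circle_mean_Re_holomorphic)
qed

lemma ball_mean_Re_holomorphic_several:
  fixes F :: "complex^'n \<Rightarrow> complex"
  assumes U: "open U" "cball x r \<subseteq> U" and F: "holomorphic_several F U"
  shows "(LINT y:cball x r|lborel. Re (F y)) = Re (F x) * measure lborel (cball x r)"
proof -
  define B where "B = cball x r"
  define u where "u y = Re (F y)" for y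
  define R where "R t y = x + exp (2 * of_real pi * \<i> * of_real t) *s (y - x)" for t :: real and y
  define \<phi> where "\<phi> t y = indicator {0..1} t * (indicator B y * u (R t y))" for t y
  have u: "continuous_on U u"
    using holomorphic_several_imp_continuous_on[OF F] unfolding u_def by (intro continuous_intros)
  have R_B: "R t y \<in> B \<longleftrightarrow> y \<in> B" for t y
    using norm_vector_scalar_mult_complex[of "exp (2 * of_real pi * \<i> * of_real t)" "y - x"]
    by (simp add: B_def R_def dist_norm norm_minus_commute norm_exp_eq_Re del: vector_ssub_ldistrib)
  have "continuous_on ({0..1} \<times> B) (\<lambda>p. u (R (fst p) (snd p)))"
    using U(2) R_B unfolding B_def R_def
    by (intro continuous_on_compose2[OF u] continuous_intros) auto
  then have "integrable lborel (\<lambda>p. indicator ({0..1} \<times> B) p *\<^sub>R u (R (fst p) (snd p)))"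
    by (rule borel_integrable_compact[rotated]) (simp add: B_def compact_Times)
  then have "integrable (lborel \<Otimes>\<^sub>M lborel) (case_prod \<phi>)"
    unfolding lborel_prod by (simp add: \<phi>_def indicator_times case_prod_beta' mult.assoc)
  \<comment> \<open>For fixed \<open>y\<close> the \<open>t\<close>-integral is a circle mean in the complex line through \<open>x\<close> and \<open>y\<close>;
    for fixed \<open>t\<close> the \<open>y\<close>-integral is unchanged by the rotation \<open>R t\<close>.\<close>
  then have Fubini: "(\<integral>y. (\<integral>t. \<phi> t y \<partial>lborel) \<partial>lborel) = (\<integral>t. (\<integral>y. \<phi> t y \<partial>lborel) \<partial>lborel)"
    by (rule lborel_pair.Fubini_integral)
  have "(\<integral>t. \<phi> t y \<partial>lborel) = indicator B y * u x" for y
    using circle_mean_Re_holomorphic_several[OF U F, of y]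
    by (cases "y \<in> B") (simp_all add: \<phi>_def R_def B_def u_def set_lebesgue_integral_def)
  moreover have "(\<integral>y. \<phi> t y \<partial>lborel) = indicator {0..1} t * (LINT y:B|lborel. u y)" for t
  proof -
    have "cmod (exp (2 * of_real pi * \<i> * of_real t)) = 1"
      by (simp add: norm_exp_eq_Re)
    from set_integral_cball_complex_rotation[OF this continuous_on_subset[OF u U(2)]]
    show ?thesis
      by (simp add: \<phi>_def R_def B_def set_lebesgue_integral_def)
  qed
  ultimately show ?thesis
    using Fubini by (simp add: B_def u_def set_lebesgue_integral_def emeasure_lborel_cball_finite mult.commute)
qed

lemma cont_superharmonic_on_Re_holomorphic_several:
  fixes F :: "complex^'n \<Rightarrow> complex"
  assumes D: "open D" and F: "holomorphic_several F D"
  shows "cont_superharmonic_on D (\<lambda>z. Re (F z))"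
  unfolding cont_superharmonic_on_def
proof (intro conjI allI impI)
  show "continuous_on D (\<lambda>z. Re (F z))"
    using holomorphic_several_imp_continuous_on[OF F] by (intro continuous_intros)
  fix x r assume "r > 0" "cball x r \<subseteq> D"
  moreover from \<open>r > 0\<close> have "measure lborel (cball x r) > 0"
    using content_cball_pos by simp
  ultimately show "(LINT y:cball x r|lborel. Re (F y)) / measure lborel (cball x r) \<le> Re (F x)"
    using ball_mean_Re_holomorphic_several[OF D _ F] by simp
qed

section \<open>Perron classes and harmonic measure\<close>

lemma cont_superharmonic_on_add_const:
  fixes D :: "'a::euclidean_space set"
  assumes s: "cont_superharmonic_on D s"
  shows "cont_superharmonic_on D (\<lambda>z. s z + K)"
  unfolding cont_superharmonic_on_def
proof (intro conjI allI impI)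
  show "continuous_on D (\<lambda>z. s z + K)"
    using s by (intro continuous_intros) (simp add: cont_superharmonic_on_def)
  fix x r assume r: "r > 0" and sub: "cball x r \<subseteq> D"
  define m where "m = measure lborel (cball x r)"
  have "m > 0"
    using content_cball_pos[OF r] by (simp add: m_def)
  have "set_integrable lborel (cball x r) s"
    unfolding set_integrable_def using s sub
    by (intro borel_integrable_compact) (auto simp: cont_superharmonic_on_def intro: continuous_on_subset)
  moreover have "set_integrable lborel (cball x r) (\<lambda>_. K)"
    unfolding set_integrable_def by (intro borel_integrable_compact continuous_intros) simp
  ultimately have "(LINT y:cball x r|lborel. s y + K) = (LINT y:cball x r|lborel. s y) + (LINT y:cball x r|lborel. K)"
    by (rule set_integral_add)
  also have "(LINT y:cball x r|lborel. K) = m * K"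
    unfolding m_def set_lebesgue_integral_def
    using emeasure_lborel_cball_finite[of x r] by (simp add: less_top)
  finally have "(LINT y:cball x r|lborel. s y + K) / m = (LINT y:cball x r|lborel. s y) / m + K"
    using \<open>m > 0\<close> by (simp add: add_divide_distrib)
  moreover have "(LINT y:cball x r|lborel. s y) / m \<le> s x"
    using s r sub by (simp add: cont_superharmonic_on_def m_def)
  ultimately show "(LINT y:cball x r|lborel. s y + K) / measure lborel (cball x r) \<le> s x + K"
    unfolding m_def by linarith
qed

lemma perron_upper_class_add_const:
  assumes "s \<in> perron_upper_class D \<phi>"
  shows "(\<lambda>z. s z + K) \<in> perron_upper_class D (\<lambda>z. \<phi> z + K)"
proof -
  obtain M where "\<forall>z\<in>D. M \<le> s z"
    using assms unfolding perron_upper_class_def bdd_below_def by auto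
  then have "bdd_below ((\<lambda>z. s z + K) ` D)"
    unfolding bdd_below_def by (intro exI[of _ "M + K"]) auto
  then show ?thesis
    using assms unfolding perron_upper_class_def by (simp add: cont_superharmonic_on_add_const)
qed

lemma perron_upper_class_self:
  assumes "cont_superharmonic_on D s" and "bdd_below (s ` D)" and s: "continuous_on (closure D) s"
  shows "s \<in> perron_upper_class D s"
  unfolding perron_upper_class_def
proof (intro CollectI conjI assms ballI allI impI)
  fix \<zeta> :: 'a and e :: real assume "\<zeta> \<in> frontier D" "e > 0"
  then obtain d where "d > 0" "\<forall>z\<in>closure D. dist z \<zeta> < d \<longrightarrow> dist (s z) (s \<zeta>) < e"
    using s unfolding continuous_on_iff by (metis frontier_def Diff_iff)
  then show "\<exists>d>0. \<forall>z\<in>D. dist z \<zeta> < d \<longrightarrow> s \<zeta> - e < s z"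
    using closure_subset by (force simp: dist_real_def)
qed

lemma Inf_real_not_bdd_below_eq:
  fixes X Y :: "real set"
  assumes "\<not> bdd_below X" "\<not> bdd_below Y"
  shows "Inf X = Inf Y"
proof -
  have "\<not> bdd_above (uminus ` X)" "\<not> bdd_above (uminus ` Y)"
    using assms by (simp_all add: bdd_above_uminus)
  then have "(\<lambda>z. \<forall>x\<in>uminus ` X. x \<le> z) = (\<lambda>_. False)" "(\<lambda>z. \<forall>x\<in>uminus ` Y. x \<le> z) = (\<lambda>_. False)"
    unfolding bdd_above_def by (auto simp: fun_eq_iff)
  then show ?thesis
    unfolding Inf_real_def Sup_real_def by simp
qed

lemma harmonic_measure_space: "harmonic_measure D x0 \<omega> \<Longrightarrow> space \<omega> = frontier D"
  unfolding harmonic_measure_def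
  using sets_eq_imp_space_eq[of \<omega> "restrict_space borel (frontier D)"] by simp

lemma harmonic_measure_borel_measurable:
  fixes \<phi> :: "'a::euclidean_space \<Rightarrow> real"
  assumes "harmonic_measure D x0 \<omega>" and \<phi>: "continuous_on (frontier D) \<phi>"
  shows "\<phi> \<in> borel_measurable \<omega>"
proof -
  have sets_\<omega>: "sets \<omega> = sets (restrict_space borel (frontier D))"
    using assms by (simp add: harmonic_measure_def)
  show ?thesis
    unfolding measurable_cong_sets[OF sets_\<omega> refl] by (rule borel_measurable_continuous_on_restrict[OF \<phi>])
qed

lemma harmonic_measure_integrable:
  fixes \<phi> :: "'a::euclidean_space \<Rightarrow> real"
  assumes hm: "harmonic_measure D x0 \<omega>" and "bounded D" and \<phi>: "continuous_on (frontier D) \<phi>"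
  shows "integrable \<omega> \<phi>"
proof -
  interpret finite_measure \<omega>
    using hm by (simp add: harmonic_measure_def)
  have "compact (frontier D)"
    using \<open>bounded D\<close> by (simp add: compact_frontier_bounded)
  then obtain B where "\<forall>y\<in>frontier D. norm (\<phi> y) \<le> B"
    using compact_imp_bounded[OF compact_continuous_image[OF \<phi>]] by (auto simp: bounded_iff)
  then have "AE y in \<omega>. norm (\<phi> y) \<le> B"
    by (intro AE_I2) (simp add: harmonic_measure_space[OF hm])
  then show ?thesis
    using harmonic_measure_borel_measurable[OF hm \<phi>] by (rule integrable_const_bound)
qed

lemma harmonic_measure_bdd_below_perron_upper_class:
  fixes \<phi> :: "'a::euclidean_space \<Rightarrow> real"
  assumes hm: "harmonic_measure D x0 \<omega>" and "bounded D" and \<phi>: "continuous_on (frontier D) \<phi>"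
    and nontrivial: "emeasure \<omega> (space \<omega>) \<noteq> 0"
  shows "bdd_below ((\<lambda>s. s x0) ` perron_upper_class D \<phi>)"
proof (rule ccontr)
  interpret finite_measure \<omega>
    using hm by (simp add: harmonic_measure_def)
  assume unbdd: "\<not> ?thesis"
  have "\<not> bdd_below ((\<lambda>s. s x0) ` perron_upper_class D (\<lambda>z. \<phi> z + 1))"
  proof
    assume "bdd_below ((\<lambda>s. s x0) ` perron_upper_class D (\<lambda>z. \<phi> z + 1))"
    then obtain m where m: "\<forall>s\<in>perron_upper_class D (\<lambda>z. \<phi> z + 1). m \<le> s x0"
      by (auto simp: bdd_below_def)
    have "m - 1 \<le> s x0" if "s \<in> perron_upper_class D \<phi>" for s
      using m perron_upper_class_add_const[OF that, of 1] by force
    with unbdd show False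
      by (auto simp: bdd_below_def)
  qed
  \<comment> \<open>\<open>Inf\<close> of a real set that is not bounded below is one fixed junk value.\<close>
  then have "perron_solution D (\<lambda>z. \<phi> z + 1) x0 = perron_solution D \<phi> x0"
    unfolding perron_solution_def using unbdd by (rule Inf_real_not_bdd_below_eq)
  then have "(\<integral>y. \<phi> y + 1 \<partial>\<omega>) = (\<integral>y. \<phi> y \<partial>\<omega>)"
    using hm \<phi> by (simp add: harmonic_measure_def continuous_intros)
  moreover have "(\<integral>y. \<phi> y + 1 \<partial>\<omega>) = (\<integral>y. \<phi> y \<partial>\<omega>) + measure \<omega> (space \<omega>)"
    using harmonic_measure_integrable[OF hm \<open>bounded D\<close> \<phi>] by simp
  ultimately have "measure \<omega> (space \<omega>) = 0"
    by simp
  with nontrivial show False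
    by (simp add: emeasure_eq_measure)
qed

lemma harmonic_measure_nn_integral_le:
  fixes \<phi> :: "'a::euclidean_space \<Rightarrow> real"
  assumes hm: "harmonic_measure D x0 \<omega>" and "bounded D" and \<phi>: "continuous_on (frontier D) \<phi>"
    and nonneg: "\<forall>y\<in>frontier D. 0 \<le> \<phi> y" and s: "s \<in> perron_upper_class D \<phi>"
  shows "(\<integral>\<^sup>+y. ennreal (\<phi> y) \<partial>\<omega>) \<le> ennreal (s x0)"
proof (cases "emeasure \<omega> (space \<omega>) = 0")
  case True
  then have "space \<omega> \<in> null_sets \<omega>"
    by (intro null_setsI) auto
  then have "AE y in \<omega>. ennreal (\<phi> y) = 0"
    by (rule AE_I') auto
  then show ?thesis
    by (simp add: nn_integral_cong_AE)
next
  case False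
  have "(\<integral>\<^sup>+y. ennreal (\<phi> y) \<partial>\<omega>) = ennreal (\<integral>y. \<phi> y \<partial>\<omega>)"
    using harmonic_measure_integrable[OF hm \<open>bounded D\<close> \<phi>] nonneg
    by (intro nn_integral_eq_integral AE_I2) (simp_all add: harmonic_measure_space[OF hm])
  also have "(\<integral>y. \<phi> y \<partial>\<omega>) = perron_solution D \<phi> x0"
    using hm \<phi> by (simp add: harmonic_measure_def)
  also have "\<dots> \<le> s x0"
    unfolding perron_solution_def
    using s harmonic_measure_bdd_below_perron_upper_class[OF hm \<open>bounded D\<close> \<phi> False]
    by (intro cInf_lower) auto
  finally show ?thesis
    by (simp add: ennreal_leI)
qed

section \<open>An elementary estimate for the cosine\<close>

lemma Re_cos_complex_of_real_mult:
  "Re (cos (complex_of_real c * w)) = cos (c * Re w) * cosh (c * Im w)"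
  by (simp add: Re_cos cosh_def)

lemma Re_cos_nonneg:
  fixes w :: complex
  assumes "\<bar>Re w\<bar> \<le> 1" "0 \<le> c" "c \<le> pi / 2"
  shows "0 \<le> Re (cos (complex_of_real c * w))"
proof -
  have "c * \<bar>Re w\<bar> \<le> c * 1"
    using assms by (intro mult_left_mono) auto
  then have "\<bar>c * Re w\<bar> \<le> c"
    using assms by (simp add: abs_mult)
  with assms have "\<bar>c * Re w\<bar> \<le> pi / 2"
    by linarith
  then have "0 \<le> cos (c * Re w)"
    by (intro cos_ge_zero) auto
  then show ?thesis
    by (simp add: Re_cos_complex_of_real_mult)
qed

lemma sin_ge_half:
  fixes s :: real
  assumes "0 \<le> s" "s \<le> 1/2"
  shows "s / 2 \<le> sin s"
proof (cases "s = 0")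
  case False
  then obtain z where z: "0 < z" "z < s" "sin s - sin 0 = (s - 0) * cos z"
    using assms MVT2[of 0 s sin cos] by (auto intro: DERIV_sin)
  have "cos (pi / 3) \<le> cos z"
    using z assms pi_gt3 by (intro cos_monotone_0_pi_le) auto
  then have "s * (1/2) \<le> s * cos z"
    using assms by (intro mult_left_mono) (auto simp: cos_60)
  then show ?thesis
    using z(3) by simp
qed simp

lemma Re_cos_lower_bound:
  fixes w :: complex and s :: real
  assumes re: "\<bar>Re w\<bar> \<le> 1" and s: "0 < s" "s \<le> 1/2" and sY: "s * \<bar>Im w\<bar> \<le> 1"
  shows "s * exp (pi / 2 * \<bar>Im w\<bar>) \<le> 4 * exp 1 * Re (cos (complex_of_real (pi / 2 - s) * w))"
proof -
  define c where "c = pi / 2 - s"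
  have c: "0 < c" "c \<le> pi"
    using s pi_gt3 by (simp_all add: c_def)
  have "sin s = cos c"
    by (simp add: c_def cos_sin_eq)
  also have "\<dots> \<le> cos \<bar>c * Re w\<bar>"
    using re c mult_left_le_one_le[of c "\<bar>Re w\<bar>"] by (intro cos_monotone_0_pi_le) (auto simp: abs_mult)
  finally have cos_ge: "s / 2 \<le> cos (c * Re w)"
    using sin_ge_half[of s] s by (simp add: cos_abs_real)
  have "exp (pi / 2 * \<bar>Im w\<bar>) \<le> exp 1 * exp (c * \<bar>Im w\<bar>)"
    using sY by (simp add: c_def algebra_simps flip: exp_add)
  also have "exp (c * \<bar>Im w\<bar>) \<le> 2 * cosh (c * Im w)"
    by (cases "Im w \<ge> 0") (simp_all add: cosh_def)
  finally have cosh_ge: "exp (pi / 2 * \<bar>Im w\<bar>) \<le> 2 * exp 1 * cosh (c * Im w)"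
    by simp
  have "s * exp (pi / 2 * \<bar>Im w\<bar>) \<le> 2 * (s / 2) * (2 * exp 1 * cosh (c * Im w))"
    using cosh_ge s by simp
  also have "\<dots> \<le> 2 * cos (c * Re w) * (2 * exp 1 * cosh (c * Im w))"
    using cos_ge by (intro mult_right_mono) (simp_all add: cosh_def)
  finally show ?thesis
    unfolding c_def[symmetric] Re_cos_complex_of_real_mult by (simp add: mult_ac)
qed

lemma ex_dyadic_interval:
  fixes x :: real
  assumes "1 \<le> x"
  obtains k :: nat where "2 ^ k \<le> x" "x < 2 ^ Suc k"
proof -
  define k where "k = nat \<lfloor>log 2 x\<rfloor>"
  have "\<lfloor>log 2 x\<rfloor> = int k"
    using assms by (simp add: k_def)
  then have "2 powr real k \<le> x \<and> x < 2 powr (real k + 1)"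
    using floor_log_eq_powr_iff[of x 2 "int k"] assms by simp
  then show ?thesis
    using that[of k] by (simp add: powr_add powr_realpow mult.commute)
qed

lemma exp_div_powr_le:
  fixes w :: complex and \<alpha> s :: real
  assumes re: "\<bar>Re w\<bar> \<le> 1" and "0 \<le> \<alpha>" "0 < s" and s: "1 \<le> 2 * s * (1 + \<bar>Im w\<bar>)"
  shows "exp (pi / 2 * cmod w) / (1 + cmod w) powr \<alpha> \<le> exp (pi / 2) * exp (pi / 2 * \<bar>Im w\<bar>) * (2 * s) powr \<alpha>"
proof -
  have "cmod w \<le> 1 + \<bar>Im w\<bar>"
    using cmod_le[of w] re by linarith
  then have "pi / 2 * cmod w \<le> pi / 2 * (1 + \<bar>Im w\<bar>)"
    by (intro mult_left_mono) auto
  then have "exp (pi / 2 * cmod w) \<le> exp (pi / 2) * exp (pi / 2 * \<bar>Im w\<bar>)"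
    by (simp add: distrib_left flip: exp_add)
  moreover have "1 \<le> (2 * s) powr \<alpha> * (1 + cmod w) powr \<alpha>"
  proof -
    have "1 \<le> (2 * s * (1 + \<bar>Im w\<bar>)) powr \<alpha>"
      using s \<open>0 \<le> \<alpha>\<close> by (rule ge_one_powr_ge_zero)
    also have "\<dots> = (2 * s) powr \<alpha> * (1 + \<bar>Im w\<bar>) powr \<alpha>"
      using \<open>0 < s\<close> by (simp add: powr_mult)
    also have "\<dots> \<le> (2 * s) powr \<alpha> * (1 + cmod w) powr \<alpha>"
      using \<open>0 \<le> \<alpha>\<close> abs_Im_le_cmod[of w] by (intro mult_left_mono powr_mono2) auto
    finally show ?thesis .
  qed
  then have "1 / (1 + cmod w) powr \<alpha> \<le> (2 * s) powr \<alpha>"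
    by (simp add: divide_le_eq)
  ultimately have "exp (pi / 2 * cmod w) * (1 / (1 + cmod w) powr \<alpha>)
      \<le> exp (pi / 2) * exp (pi / 2 * \<bar>Im w\<bar>) * (2 * s) powr \<alpha>"
    by (intro mult_mono) auto
  then show ?thesis
    by simp
qed

lemma exp_div_powr_le_Re_cos:
  fixes w :: complex and \<alpha> :: real
  assumes re: "\<bar>Re w\<bar> \<le> 1" and "0 \<le> \<alpha>"
  obtains k :: nat where "exp (pi / 2 * cmod w) / (1 + cmod w) powr \<alpha>
    \<le> 4 * exp (1 + pi / 2) * 2 powr \<alpha> * (2 powr (1 - \<alpha>)) ^ Suc k
        * Re (cos (complex_of_real (pi / 2 - (1/2) ^ Suc k) * w))"
proof -
  obtain k :: nat where k: "2 ^ k \<le> 1 + \<bar>Im w\<bar>" "1 + \<bar>Im w\<bar> < 2 ^ Suc k"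
    using ex_dyadic_interval[of "1 + \<bar>Im w\<bar>"] by auto
  define s :: real where "s = (1/2) ^ Suc k"
  have s_powr: "s = 2 powr (- real (Suc k))"
    by (simp add: s_def powr_minus powr_realpow power_one_over inverse_eq_divide del: of_nat_Suc)
  have s: "0 < s" "s \<le> 1/2"
    by (simp_all add: s_def power_le_one)
  have "s * (1 + \<bar>Im w\<bar>) < s * 2 ^ Suc k"
    using k(2) s by simp
  then have sY: "s * \<bar>Im w\<bar> \<le> 1"
    by (simp add: s_def power_one_over field_simps)
  have "1 \<le> 2 * s * (1 + \<bar>Im w\<bar>)"
    using k(1) mult_left_mono[OF k(1), of "2 * s"] s by (simp add: s_def power_one_over field_simps)
  from exp_div_powr_le[OF re \<open>0 \<le> \<alpha>\<close> s(1) this]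
  have "exp (pi / 2 * cmod w) / (1 + cmod w) powr \<alpha>
      \<le> exp (pi / 2) * exp (pi / 2 * \<bar>Im w\<bar>) * (2 * s) powr \<alpha>" .
  also have "(2 * s) powr \<alpha> = 2 powr \<alpha> * (2 powr (1 - \<alpha>)) ^ Suc k * s"
    by (simp add: s_powr powr_power powr_mult_base powr_powr flip: powr_add) (simp add: algebra_simps)
  also have "exp (pi / 2) * exp (pi / 2 * \<bar>Im w\<bar>) * (2 powr \<alpha> * (2 powr (1 - \<alpha>)) ^ Suc k * s)
      = exp (pi / 2) * 2 powr \<alpha> * (2 powr (1 - \<alpha>)) ^ Suc k * (s * exp (pi / 2 * \<bar>Im w\<bar>))"
    by (simp add: mult_ac)
  also have "\<dots> \<le> exp (pi / 2) * 2 powr \<alpha> * (2 powr (1 - \<alpha>)) ^ Suc k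
      * (4 * exp 1 * Re (cos (complex_of_real (pi / 2 - s) * w)))"
    using Re_cos_lower_bound[OF re s sY] by (intro mult_left_mono) auto
  finally show ?thesis
    using that by (simp add: s_def exp_add mult_ac)
qed

lemma exp_div_powr_le_suminf_Re_cos:
  fixes w :: complex and \<alpha> :: real
  defines "q \<equiv> 2 powr (1 - \<alpha>)"
  assumes "\<bar>Re w\<bar> \<le> 1" and "0 \<le> \<alpha>"
  shows "ennreal (exp (pi / 2 * cmod w) / (1 + cmod w) powr \<alpha>)
    \<le> (\<Sum>k. ennreal (4 * exp (1 + pi / 2) * 2 powr \<alpha> * q ^ Suc k)
          * ennreal (Re (cos (complex_of_real (pi / 2 - (1/2) ^ Suc k) * w))))"
    (is "_ \<le> (\<Sum>k. ?g k)")
proof -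
  obtain k where "exp (pi / 2 * cmod w) / (1 + cmod w) powr \<alpha>
    \<le> 4 * exp (1 + pi / 2) * 2 powr \<alpha> * q ^ Suc k * Re (cos (complex_of_real (pi / 2 - (1/2) ^ Suc k) * w))"
    using exp_div_powr_le_Re_cos[OF assms(2,3)] unfolding q_def by blast
  then have "ennreal (exp (pi / 2 * cmod w) / (1 + cmod w) powr \<alpha>)
      \<le> ennreal (4 * exp (1 + pi / 2) * 2 powr \<alpha> * q ^ Suc k
          * Re (cos (complex_of_real (pi / 2 - (1/2) ^ Suc k) * w)))"
    by (rule ennreal_leI)
  also have "\<dots> = ?g k"
    by (simp add: q_def ennreal_mult')
  also have "?g k \<le> (\<Sum>k. ?g k)"
    using sum_le_suminf[OF summableI, of "{k}" ?g] by simp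
  finally show ?thesis .
qed

lemma harmonic_measure_nn_integral_Re_le:
  fixes F :: "complex^'n \<Rightarrow> complex"
  assumes "open \<Omega>" and F: "holomorphic_several F \<Omega>" and nonneg: "\<forall>z\<in>\<Omega>. 0 \<le> Re (F z)"
    and D: "rel_compact_subdomain D \<Omega>" and hm: "harmonic_measure D x0 \<omega>"
  shows "(\<integral>\<^sup>+z. ennreal (Re (F z)) \<partial>\<omega>) \<le> ennreal (Re (F x0))"
proof -
  have "open D" "closure D \<subseteq> \<Omega>" "compact (closure D)"
    using D by (simp_all add: rel_compact_subdomain_def domain_def)
  then have D_sub: "D \<subseteq> \<Omega>" "frontier D \<subseteq> \<Omega>" and "bounded D"
    using closure_subset compact_imp_bounded bounded_subset by (auto simp: frontier_def)
  have cont: "continuous_on \<Omega> (\<lambda>z. Re (F z))"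
    using holomorphic_several_imp_continuous_on[OF F] by (intro continuous_intros)
  have "(\<lambda>z. Re (F z)) \<in> perron_upper_class D (\<lambda>z. Re (F z))"
  proof (rule perron_upper_class_self)
    show "cont_superharmonic_on D (\<lambda>z. Re (F z))"
      using \<open>open D\<close> holomorphic_several_subset[OF F D_sub(1)]
      by (rule cont_superharmonic_on_Re_holomorphic_several)
    show "bdd_below ((\<lambda>z. Re (F z)) ` D)"
      using nonneg D_sub(1) by (auto simp: bdd_below_def)
    show "continuous_on (closure D) (\<lambda>z. Re (F z))"
      using cont \<open>closure D \<subseteq> \<Omega>\<close> by (rule continuous_on_subset)
  qed
  then show ?thesis
    using nonneg D_sub(2) continuous_on_subset[OF cont D_sub(2)]
    by (intro harmonic_measure_nn_integral_le[OF hm \<open>bounded D\<close>]) auto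
qed

lemma harmonic_measure_nn_integral_Re_cos_le:
  fixes f :: "complex^'n \<Rightarrow> complex"
  assumes "open \<Omega>" and f: "holomorphic_several f \<Omega>" and re: "\<forall>z\<in>\<Omega>. \<bar>Re (f z)\<bar> \<le> 1"
    and "Im (f z0) = 0" and "0 \<le> c" "c \<le> pi / 2"
    and "rel_compact_subdomain D \<Omega>" and "harmonic_measure D z0 \<omega>"
  shows "(\<integral>\<^sup>+z. ennreal (Re (cos (complex_of_real c * f z))) \<partial>\<omega>) \<le> 1"
proof -
  have "holomorphic_several (\<lambda>z. cos (complex_of_real c * f z)) \<Omega>"
    using f by (rule holomorphic_several_compose[where T = UNIV]) (auto intro: holomorphic_intros)
  moreover have "\<forall>z\<in>\<Omega>. 0 \<le> Re (cos (complex_of_real c * f z))"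
    using re \<open>0 \<le> c\<close> \<open>c \<le> pi / 2\<close> by (simp add: Re_cos_nonneg)
  ultimately have "(\<integral>\<^sup>+z. ennreal (Re (cos (complex_of_real c * f z))) \<partial>\<omega>)
      \<le> ennreal (Re (cos (complex_of_real c * f z0)))"
    using assms by (intro harmonic_measure_nn_integral_Re_le) auto
  also have "Re (cos (complex_of_real c * f z0)) \<le> 1"
    using \<open>Im (f z0) = 0\<close> by (simp add: Re_cos_complex_of_real_mult)
  finally show ?thesis
    by (simp add: ennreal_leI order_trans)
qed

lemma harmonic_measure_nn_integral_exp_div_powr_le:
  fixes f :: "complex^'n \<Rightarrow> complex" and \<alpha> :: real
  defines "q \<equiv> 2 powr (1 - \<alpha>)"
  assumes "open \<Omega>" and f: "holomorphic_several f \<Omega>" and re: "\<forall>z\<in>\<Omega>. \<bar>Re (f z)\<bar> \<le> 1"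
    and "Im (f z0) = 0" and "1 < \<alpha>"
    and D: "rel_compact_subdomain D \<Omega>" and hm: "harmonic_measure D z0 \<omega>"
  shows "(\<integral>\<^sup>+z. ennreal (exp (pi / 2 * cmod (f z)) / (1 + cmod (f z)) powr \<alpha>) \<partial>\<omega>)
    \<le> ennreal (4 * exp (1 + pi / 2) * 2 powr \<alpha> * q / (1 - q))"
proof -
  define A where "A = 4 * exp (1 + pi / 2) * 2 powr \<alpha>"
  define c where "c k = pi / 2 - (1/2) ^ Suc k" for k :: nat
  define h where "h k z = Re (cos (complex_of_real (c k) * f z))" for k z
  have q: "0 < q" "q < 1"
    using \<open>1 < \<alpha>\<close> by (simp_all add: q_def powr_less_one)
  have c: "0 \<le> c k" "c k \<le> pi / 2" for k
    using pi_gt3 power_le_one[of "1/2 :: real" "Suc k"] by (simp_all add: c_def)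
  have frontier: "space \<omega> = frontier D" "frontier D \<subseteq> \<Omega>"
    using harmonic_measure_space[OF hm] D by (auto simp: rel_compact_subdomain_def frontier_def)
  have h_meas: "h k \<in> borel_measurable \<omega>" for k
    using holomorphic_several_imp_continuous_on[OF f] frontier(2) unfolding h_def
    by (intro harmonic_measure_borel_measurable[OF hm] continuous_intros) (auto intro: continuous_on_subset)
  have h_le: "(\<integral>\<^sup>+z. ennreal (h k z) \<partial>\<omega>) \<le> 1" for k
    unfolding h_def using assms c by (intro harmonic_measure_nn_integral_Re_cos_le) auto
  have "ennreal (exp (pi / 2 * cmod (f z)) / (1 + cmod (f z)) powr \<alpha>)
      \<le> (\<Sum>k. ennreal (A * q ^ Suc k) * ennreal (h k z))" if "z \<in> space \<omega>" for z
    using re frontier that \<open>1 < \<alpha>\<close> exp_div_powr_le_suminf_Re_cos[of "f z" \<alpha>]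
    by (auto simp: A_def q_def h_def c_def)
  then have "(\<integral>\<^sup>+z. ennreal (exp (pi / 2 * cmod (f z)) / (1 + cmod (f z)) powr \<alpha>) \<partial>\<omega>)
      \<le> (\<integral>\<^sup>+z. (\<Sum>k. ennreal (A * q ^ Suc k) * ennreal (h k z)) \<partial>\<omega>)"
    by (rule nn_integral_mono)
  also have "\<dots> = (\<Sum>k. ennreal (A * q ^ Suc k) * (\<integral>\<^sup>+z. ennreal (h k z) \<partial>\<omega>))"
    using h_meas by (simp add: nn_integral_suminf nn_integral_cmult)
  also have "\<dots> \<le> (\<Sum>k. ennreal (A * q ^ Suc k))"
    using h_le by (intro suminf_le summableI) (simp add: mult_left_le)
  also have "\<dots> = ennreal (A * q / (1 - q))"
  proof (rule suminf_ennreal_eq)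
    show "(\<lambda>k. A * q ^ Suc k) sums (A * q / (1 - q))"
      using sums_mult[OF geometric_sums[of q], of "A * q"] q by (simp add: field_simps)
  qed (use q in \<open>simp add: A_def\<close>)
  finally show ?thesis
    by (simp add: A_def)
qed

theorem theorem1p5:
  fixes \<Omega> :: "(complex^'n) set" and f :: "complex^'n \<Rightarrow> complex"
    and z0 :: "complex^'n" and \<alpha> :: real
  assumes "domain \<Omega>"
    and "holomorphic_several f \<Omega>"
    and "\<forall>z\<in>\<Omega>. \<bar>Re (f z)\<bar> \<le> 1"
    and "z0 \<in> \<Omega>" and "Im (f z0) = 0"
    and "\<alpha> > 1"
  shows "\<exists>C>0. \<forall>\<Omega>t \<omega> t. exhaustion \<Omega>t \<Omega> \<longrightarrow> z0 \<in> \<Omega>t t \<longrightarrow>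
            harmonic_measure (\<Omega>t t) z0 \<omega> \<longrightarrow>
            (\<integral>\<^sup>+ z. ennreal (exp (pi / 2 * cmod (f z)) / (1 + cmod (f z)) powr \<alpha>) \<partial>\<omega>)
              \<le> ennreal C"
proof -
  define q where "q = 2 powr (1 - \<alpha>)"
  define C where "C = 4 * exp (1 + pi / 2) * 2 powr \<alpha> * q / (1 - q)"
  have "0 < q" "q < 1"
    using \<open>\<alpha> > 1\<close> by (simp_all add: q_def powr_less_one)
  then have "C > 0"
    by (simp add: C_def)
  \<comment> \<open>The bound does not need \<open>z0 \<in> \<Omega>t t\<close>: Perron solutions are defined at every point.\<close>
  moreover have "(\<integral>\<^sup>+ z. ennreal (exp (pi / 2 * cmod (f z)) / (1 + cmod (f z)) powr \<alpha>) \<partial>\<omega>) \<le> ennreal C"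
    if "exhaustion \<Omega>t \<Omega>" and "harmonic_measure (\<Omega>t t) z0 \<omega>" for \<Omega>t \<omega> t
    using that assms harmonic_measure_nn_integral_exp_div_powr_le[of \<Omega> f z0 \<alpha> "\<Omega>t t" \<omega>]
    by (auto simp: exhaustion_def domain_def C_def q_def)
  ultimately show ?thesis
    by blast
qed

end
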